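(* Let $m\ge 1$ and $n\geq 2m$ be integers, and let $p,q$ be real numbers with $0<p\leq q$ and $0<p+q<1$. Then the minimum discrepancy of $C_{n,m}$ satisfies $$\delta(C_{n,m})\geq\min\{m^2,\ (1+\gamma)m\},$$ where $\gamma=\gamma_{p,q}=\log_{\frac{q}{1-p}}\left(\frac{p}{1-q}\right)$.
   Context: For integers $n\geq 2$, $N=\binom{n}{2}$ and $1\leq m\leq n$, the community code $C_{n,m}\subseteq\mathbb{F}_2^N$ consists of exactly those binary vectors of length $N$ that are the upper-triangular (off-diagonal) part of the adjacency matrix of a simple undirected graph on the labeled vertex set $\{1,\ldots,n\}$ which is a disjoint union of cliques, each clique having at least $m$ vertices. For $\mathbf{x},\mathbf{y}\in\mathbb{F}_2^N$ and $a,b\in\mathbb{F}_2$ let $d_{ab}(\mathbf{y},\mathbf{x})=|\{i: y_i=a,\ x_i=b\}|$. The discrepancy (associated with a binary asymmetric channel with crossover probabilities $p$ for $0\to1$ and $q$ for $1\to0$) is $\delta(\mathbf{y},\mathbf{x})=\gamma\, d_{10}(\mathbf{y},\mathbf{x})+d_{01}(\mathbf{y},\mathbf{x})$ with $\gamma=\log_{\frac{q}{1-p}}\left(\frac{p}{1-q}\right)$ (one has $\gamma\ge 1$). The minimum discrepancy $\delta(C)$ of a code $C$ is the minimum of $\delta(\mathbf{y},\mathbf{x})$ over all ordered pairs of distinct codewords $\mathbf{x},\mathbf{y}\in C$. *)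

theory Defs
  imports Complex_Main
begin

text \<open>Coordinates of F_2^N, N = n choose 2: unordered pairs {i,j} of vertices in {1..n},
  represented as (i,j) with 1 <= i < j <= n (upper-triangular off-diagonal entries).
  A binary vector of length N is a function on these pairs, taken False outside.\<close>

definition pairs :: "nat \<Rightarrow> (nat \<times> nat) set" where
  "pairs n = {(i,j). 1 \<le> i \<and> i < j \<and> j \<le> n}"

definition clique_partition :: "nat set \<Rightarrow> nat \<Rightarrow> nat set set \<Rightarrow> bool" where
  "clique_partition V m P \<longleftrightarrow>
     \<Union>P = V \<and> {} \<notin> P \<and>
     (\<forall>A\<in>P. \<forall>B\<in>P. A \<noteq> B \<longrightarrow> A \<inter> B = {}) \<and>
     (\<forall>B\<in>P. card B \<ge> m)"

definition cluster_graph :: "nat \<Rightarrow> nat \<Rightarrow> (nat \<Rightarrow> nat \<Rightarrow> bool) \<Rightarrow> bool" where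
  "cluster_graph n m E \<longleftrightarrow>
     (\<exists>P. clique_partition {1..n} m P \<and>
          (\<forall>i\<in>{1..n}. \<forall>j\<in>{1..n}. E i j \<longleftrightarrow> i \<noteq> j \<and> (\<exists>B\<in>P. i \<in> B \<and> j \<in> B)))"

definition adj_vec :: "nat \<Rightarrow> (nat \<Rightarrow> nat \<Rightarrow> bool) \<Rightarrow> (nat \<times> nat \<Rightarrow> bool)" where
  "adj_vec n E = (\<lambda>(i,j). (i,j) \<in> pairs n \<and> E i j)"

definition community_code :: "nat \<Rightarrow> nat \<Rightarrow> (nat \<times> nat \<Rightarrow> bool) set" where
  "community_code n m = {adj_vec n E | E. cluster_graph n m E}"

definition dd :: "nat \<Rightarrow> bool \<Rightarrow> bool \<Rightarrow> (nat \<times> nat \<Rightarrow> bool) \<Rightarrow> (nat \<times> nat \<Rightarrow> bool) \<Rightarrow> nat" where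
  "dd n a b y x = card {k \<in> pairs n. y k = a \<and> x k = b}"

definition gamma_pq :: "real \<Rightarrow> real \<Rightarrow> real" where
  "gamma_pq p q = log (q / (1 - p)) (p / (1 - q))"

definition discrepancy :: "nat \<Rightarrow> real \<Rightarrow> real \<Rightarrow> (nat \<times> nat \<Rightarrow> bool) \<Rightarrow> (nat \<times> nat \<Rightarrow> bool) \<Rightarrow> real" where
  "discrepancy n p q y x = gamma_pq p q * real (dd n True False y x) + real (dd n False True y x)"

definition min_discrepancy :: "nat \<Rightarrow> real \<Rightarrow> real \<Rightarrow> (nat \<times> nat \<Rightarrow> bool) set \<Rightarrow> real" where
  "min_discrepancy n p q C = Inf {discrepancy n p q y x | x y. x \<in> C \<and> y \<in> C \<and> x \<noteq> y}"

end

theory Submission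
  imports Defs "HOL-Library.Disjoint_Sets"
begin

(* A codeword of C_{n,m} is an equivalence relation on {1..n} whose classes have at least m
   elements, and for codewords x, y the counts d10(y,x) and d01(y,x) are the numbers of unordered
   pairs joined by y but not by x, resp. by x but not by y.

   If one relation refines the other, a pair joined only by the coarser one links two classes of
   the finer one, and all m^2 pairs between these classes are joined only by the coarser one.
   Otherwise both counts t and u are positive. A pair {i,j} joined by R but not by S injects the
   R-class of i, minus i, into the pairs joined only by R (send z to {j,z} or {i,z} according to
   whether z is S-related to i); so t >= m - 1, and if t = m - 1 every such pair contains i or j.
   In that rigid situation one endpoint a has an S-class meeting its R-class only in a, which gives
   m - 1 pairs {a,z} and, disjoint from them, a whole R-class worth of pairs joined only by S; so
   u >= 2m - 1. Since gamma >= 1, an elementary case analysis on gamma t + u finishes. *)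

definition upairs :: "'a rel \<Rightarrow> 'a set set" where
  "upairs E = (\<lambda>(u, v). {u, v}) ` E"

lemma upairsI: "(u, v) \<in> E \<Longrightarrow> {u, v} \<in> upairs E"
  by (force simp: upairs_def)

lemma upairsE:
  assumes "e \<in> upairs E"
  obtains u v where "(u, v) \<in> E" and "e = {u, v}"
  using assms by (auto simp: upairs_def)

lemma upairs_empty_iff [simp]: "upairs E = {} \<longleftrightarrow> E = {}"
  by (simp add: upairs_def)

lemma upairs_mono: "E \<subseteq> F \<Longrightarrow> upairs E \<subseteq> upairs F"
  by (auto simp: upairs_def)

lemma finite_upairs: "finite E \<Longrightarrow> finite (upairs E)"
  by (simp add: upairs_def)

lemma card_upairs_Times:
  assumes "A \<inter> B = {}"
  shows "card (upairs (A \<times> B)) = card A * card B"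
proof -
  have "inj_on (\<lambda>(u, v). {u, v}) (A \<times> B)"
    using assms by (auto intro!: inj_onI simp: doubleton_eq_iff)
  then show ?thesis
    by (simp add: upairs_def card_image card_cartesian_product)
qed

locale clustering =
  fixes V :: "'a set" and m :: nat and R :: "'a rel"
  assumes finite_V: "finite V"
    and equiv: "equiv V R"
    and card_class: "v \<in> V \<Longrightarrow> m \<le> card (R``{v})"
begin

lemma rel_sym: "(u, v) \<in> R \<Longrightarrow> (v, u) \<in> R"
  using equiv by (auto elim: equivE dest: symD)

lemma rel_trans: "(u, v) \<in> R \<Longrightarrow> (v, w) \<in> R \<Longrightarrow> (u, w) \<in> R"
  using equiv by (auto elim: equivE dest: transD)

lemma rel_refl: "v \<in> V \<Longrightarrow> (v, v) \<in> R"
  using equiv by (auto elim: equivE dest: refl_onD)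

lemma rel_subset: "R \<subseteq> V \<times> V"
  using equiv by (rule equiv_type)

lemma finite_rel: "finite R"
  using finite_subset[OF rel_subset] finite_V by blast

lemma finite_class: "finite (R``{v})"
  using finite_rel by (simp add: finite_Image)

end

locale two_clusterings = R: clustering V m R + S: clustering V m S
  for V :: "'a set" and m :: nat and R S :: "'a rel"

sublocale two_clusterings \<subseteq> swap: two_clusterings V m S R
  by unfold_locales

context two_clusterings
begin

lemma finite_upairs_diff: "finite (upairs (R - S))"
  using R.finite_rel by (simp add: finite_upairs)

lemma square_le_card_upairs_diff:
  assumes "S \<subset> R"
  shows "m * m \<le> card (upairs (R - S))"
proof -
  obtain i j where ij: "(i, j) \<in> R" "(i, j) \<notin> S"
    using assms by auto
  have i: "i \<in> V" and j: "j \<in> V"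
    using ij R.rel_subset by auto
  have disjoint: "S``{i} \<inter> S``{j} = {}"
    using ij S.equiv by (simp add: disjnt_equiv_class flip: disjnt_def)
  have "S``{i} \<times> S``{j} \<subseteq> R - S"
  proof safe
    fix a b assume a: "(i, a) \<in> S" and b: "(j, b) \<in> S"
    then show "(a, b) \<in> R"
      using assms ij(1) by (blast intro: R.rel_trans R.rel_sym)
    show False if "(a, b) \<in> S"
      using a b that ij(2) by (blast intro: S.rel_trans S.rel_sym)
  qed
  then have "card (upairs (S``{i} \<times> S``{j})) \<le> card (upairs (R - S))"
    by (intro card_mono finite_upairs_diff upairs_mono)
  moreover have "m * m \<le> card (S``{i}) * card (S``{j})"
    using S.card_class i j by (intro mult_le_mono)
  ultimately show ?thesis
    using disjoint by (simp add: card_upairs_Times)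
qed

lemma class_embeds_into_upairs_diff:
  assumes ij: "(i, j) \<in> R - S"
  obtains f where "inj_on f (R``{i} - {i})" and "f ` (R``{i} - {i}) \<subseteq> upairs (R - S)"
    and "\<And>z. i \<in> f z \<or> j \<in> f z"
proof -
  define f where "f z = (if (i, z) \<in> S then {j, z} else {i, z})" for z
  have "i \<noteq> j"
    using ij R.rel_subset S.rel_refl by auto
  have "f z \<in> upairs (R - S)" if z: "z \<in> R``{i} - {i}" for z
  proof (cases "(i, z) \<in> S")
    case True
    have "(j, z) \<in> R"
      using ij z R.rel_trans[OF R.rel_sym[of i j]] by blast
    moreover have "(j, z) \<notin> S"
      using ij True by (meson S.rel_trans S.rel_sym DiffD2)
    ultimately show ?thesis
      using True by (simp add: f_def upairsI)
  next
    case False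
    then show ?thesis
      using z by (simp add: f_def upairsI)
  qed
  moreover have "inj_on f (R``{i} - {i})"
    using \<open>i \<noteq> j\<close> by (intro inj_onI) (auto simp: f_def doubleton_eq_iff split: if_splits)
  moreover have "i \<in> f z \<or> j \<in> f z" for z
    by (simp add: f_def)
  ultimately show thesis
    using that by blast
qed

lemma card_class_le_card_upairs_diff:
  assumes "(i, j) \<in> R - S"
  shows "card (R``{i}) \<le> card (upairs (R - S)) + 1"
proof -
  obtain f where f: "inj_on f (R``{i} - {i})" "f ` (R``{i} - {i}) \<subseteq> upairs (R - S)"
    using class_embeds_into_upairs_diff[OF assms] by metis
  have "i \<in> V"
    using assms R.rel_subset by blast
  then have "card (R``{i}) - 1 = card (R``{i} - {i})"
    by (simp add: R.rel_refl)
  also have "\<dots> = card (f ` (R``{i} - {i}))"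
    using f(1) by (simp add: card_image)
  also have "\<dots> \<le> card (upairs (R - S))"
    using f(2) finite_upairs_diff by (simp add: card_mono)
  finally show ?thesis
    by simp
qed

lemma le_card_upairs_diff:
  assumes "R - S \<noteq> {}"
  shows "m \<le> card (upairs (R - S)) + 1"
proof -
  obtain i j where ij: "(i, j) \<in> R - S"
    using assms by auto
  then have "i \<in> V"
    using R.rel_subset by auto
  then show ?thesis
    using R.card_class card_class_le_card_upairs_diff[OF ij] by (meson le_trans)
qed

lemma upairs_diff_incident:
  assumes ij: "(i, j) \<in> R - S" and small: "card (upairs (R - S)) < card (R``{i})"
    and e: "e \<in> upairs (R - S)"
  shows "i \<in> e \<or> j \<in> e"
proof -
  obtain f where f: "inj_on f (R``{i} - {i})" "f ` (R``{i} - {i}) \<subseteq> upairs (R - S)"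
    and incident: "\<And>z. i \<in> f z \<or> j \<in> f z"
    using class_embeds_into_upairs_diff[OF ij] by metis
  have "i \<in> R``{i}"
    using ij R.rel_subset R.rel_refl by auto
  then have "card (upairs (R - S)) \<le> card (f ` (R``{i} - {i}))"
    using small f(1) R.finite_class by (simp add: card_image)
  then have "f ` (R``{i} - {i}) = upairs (R - S)"
    using f(2) finite_upairs_diff by (intro card_seteq)
  then show ?thesis
    using e incident by (metis imageE)
qed

lemma le_card_class_diff_of_incident:
  assumes ab: "(a, b) \<in> R - S" and small: "card (R``{b}) \<le> m"
    and incident: "\<And>e. e \<in> upairs (R - S) \<Longrightarrow> a \<in> e \<or> b \<in> e"
  shows "m \<le> card (S``{b} - R``{b})"
proof -
  have b: "b \<in> V"
    using ab R.rel_subset by blast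
  have ab_class: "a \<in> R``{b}" "b \<in> R``{b}"
    using ab b by (auto intro: R.rel_sym R.rel_refl)
  have "\<not> S``{b} \<subseteq> R``{b}"
  proof
    assume "S``{b} \<subseteq> R``{b}"
    moreover have "a \<notin> S``{b}"
      using ab S.rel_sym by blast
    ultimately have "S``{b} \<subseteq> R``{b} - {a}"
      by blast
    then have "card (S``{b}) \<le> card (R``{b}) - 1"
      using ab_class R.finite_class by (metis card_Diff_singleton card_mono finite_Diff)
    moreover have "b \<in> S``{b}"
      using b S.rel_refl by blast
    then have "0 < card (S``{b})"
      using S.finite_class card_gt_0_iff by blast
    ultimately show False
      using small S.card_class[OF b] by linarith
  qed
  then obtain z where z: "(b, z) \<in> S" "(b, z) \<notin> R"
    by blast
  \<comment> \<open>Pairs joined only by R contain a or b, which both lie in the R-class of b;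
     hence the R-class of z cannot leave the S-class of b.\<close>
  have "R``{z} \<subseteq> S``{b} - R``{b}"
  proof
    fix w assume "w \<in> R``{z}"
    then have zw: "(z, w) \<in> R"
      by simp
    have w_out: "w \<notin> R``{b}"
      using z zw R.rel_trans R.rel_sym by blast
    have "(z, w) \<in> S"
    proof (rule ccontr)
      assume "(z, w) \<notin> S"
      then have "a \<in> {z, w} \<or> b \<in> {z, w}"
        using zw by (intro incident upairsI) simp
      then show False
        using ab_class w_out z(2) by blast
    qed
    then show "w \<in> S``{b} - R``{b}"
      using z(1) w_out S.rel_trans by blast
  qed
  then have "card (R``{z}) \<le> card (S``{b} - R``{b})"
    using S.finite_class by (simp add: card_mono)
  moreover have "z \<in> V"
    using z S.rel_subset by blast
  ultimately show ?thesis
    using R.card_class by (meson le_trans)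
qed

lemma double_le_card_upairs_diff_of_isolated:
  assumes ab: "(a, b) \<in> R - S" and small: "card (R``{b}) \<le> m"
    and incident: "\<And>e. e \<in> upairs (R - S) \<Longrightarrow> a \<in> e \<or> b \<in> e"
    and isolated: "S``{a} \<inter> R``{a} = {a}"
  shows "2 * m \<le> card (upairs (S - R)) + 1"
proof -
  have a: "a \<in> V"
    using ab R.rel_subset by blast
  define Pa where "Pa = upairs ({a} \<times> (S``{a} - {a}))"
  define Pb where "Pb = upairs ({b} \<times> (S``{b} - R``{b}))"
  have "card Pa = card (S``{a}) - 1"
    using a S.rel_refl S.finite_class by (simp add: Pa_def card_upairs_Times)
  then have card_Pa: "m \<le> card Pa + 1"
    using S.card_class[OF a] by linarith
  have "card Pb = card (S``{b} - R``{b})"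
    using ab R.rel_subset R.rel_refl by (auto simp: Pb_def card_upairs_Times)
  then have card_Pb: "m \<le> card Pb"
    using le_card_class_diff_of_incident[OF ab small incident] by simp
  have "{a} \<times> (S``{a} - {a}) \<subseteq> S - R"
    using isolated by blast
  moreover have "{b} \<times> (S``{b} - R``{b}) \<subseteq> S - R"
    by blast
  ultimately have "Pa \<union> Pb \<subseteq> upairs (S - R)"
    by (auto simp: Pa_def Pb_def dest: upairs_mono)
  moreover have "Pa \<inter> Pb = {}"
  proof -
    have "a \<noteq> b" "(b, a) \<notin> S"
      using ab a S.rel_refl S.rel_sym by blast+
    then show ?thesis
      by (auto simp: Pa_def Pb_def upairs_def doubleton_eq_iff)
  qed
  moreover have "finite (upairs (S - R))"
    using S.finite_rel by (simp add: finite_upairs)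
  ultimately have "card Pa + card Pb \<le> card (upairs (S - R))"
    by (metis card_Un_disjoint card_mono finite_Un finite_subset)
  then show ?thesis
    using card_Pa card_Pb by linarith
qed

lemma isolated_endpoint:
  assumes ij: "(i, j) \<in> R - S"
    and incident: "\<And>e. e \<in> upairs (R - S) \<Longrightarrow> i \<in> e \<or> j \<in> e"
  shows "S``{i} \<inter> R``{i} = {i} \<or> S``{j} \<inter> R``{j} = {j}"
proof (rule ccontr)
  assume not_isolated: "\<not> ?thesis"
  have other_elem: "\<exists>z \<in> A. z \<noteq> a" if "a \<in> A" "A \<noteq> {a}" for a :: 'a and A
    using that by blast
  have ij_R: "(i, j) \<in> R" and ij_S: "(i, j) \<notin> S"
    using ij by auto
  then have "i \<in> S``{i} \<inter> R``{i}" "j \<in> S``{j} \<inter> R``{j}"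
    using R.rel_subset R.rel_refl S.rel_refl by auto
  moreover have "S``{i} \<inter> R``{i} \<noteq> {i}" "S``{j} \<inter> R``{j} \<noteq> {j}"
    using not_isolated by simp_all
  ultimately have "\<exists>z \<in> S``{i} \<inter> R``{i}. z \<noteq> i" "\<exists>z' \<in> S``{j} \<inter> R``{j}. z' \<noteq> j"
    using other_elem by simp_all
  then obtain z z' where z: "(i, z) \<in> R" "(i, z) \<in> S" "z \<noteq> i"
    and z': "(j, z') \<in> R" "(j, z') \<in> S" "z' \<noteq> j"
    by blast
  have "(z, z') \<in> R"
    using R.rel_trans[OF R.rel_sym[OF z(1)] R.rel_trans[OF ij_R z'(1)]] .
  moreover have "(z, z') \<notin> S"
    using S.rel_trans[OF S.rel_trans[OF z(2)] S.rel_sym[OF z'(2)]] ij_S by blast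
  ultimately have "{z, z'} \<in> upairs (R - S)"
    by (simp add: upairsI)
  then have "i \<in> {z, z'} \<or> j \<in> {z, z'}"
    by (rule incident)
  moreover have "z \<noteq> j" "z' \<noteq> i"
    using z(2) S.rel_sym[OF z'(2)] ij_S by blast+
  ultimately show False
    using z(3) z'(3) by simp
qed

lemma double_le_card_upairs_diff_of_small:
  assumes nonempty: "R - S \<noteq> {}" and small: "card (upairs (R - S)) < m"
  shows "2 * m \<le> card (upairs (S - R)) + 1"
proof -
  obtain i j where ij: "(i, j) \<in> R - S"
    using nonempty by auto
  have i: "i \<in> V"
    using ij R.rel_subset by blast
  have same_class: "R``{j} = R``{i}"
    using ij R.equiv by (metis DiffD1 R.rel_sym equiv_class_eq)
  have "card (R``{i}) \<le> m"
    using card_class_le_card_upairs_diff[OF ij] small by linarith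
  then have class_small: "card (R``{j}) \<le> m" "card (R``{i}) \<le> m"
    using same_class by simp_all
  have incident: "i \<in> e \<or> j \<in> e" if "e \<in> upairs (R - S)" for e
    using upairs_diff_incident[OF ij _ that] small R.card_class[OF i] by linarith
  have "S``{i} \<inter> R``{i} = {i} \<or> S``{j} \<inter> R``{j} = {j}"
    using ij incident by (rule isolated_endpoint)
  then consider "S``{i} \<inter> R``{i} = {i}" | "S``{j} \<inter> R``{j} = {j}"
    by blast
  then show ?thesis
  proof cases
    case 1
    then show ?thesis
      using double_le_card_upairs_diff_of_isolated[OF ij class_small(1) incident] by blast
  next
    case 2
    have "(j, i) \<in> R - S"
      using ij R.rel_sym S.rel_sym by blast
    moreover have "j \<in> e \<or> i \<in> e" if "e \<in> upairs (R - S)" for e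
      using incident[OF that] by blast
    ultimately show ?thesis
      using double_le_card_upairs_diff_of_isolated[OF _ class_small(2) _ 2] by blast
  qed
qed

end

lemma min_square_linear_le:
  fixes t u m :: nat and g :: real
  assumes g: "1 \<le> g" and t_ge: "m \<le> t + 1" and u_ge: "m \<le> u + 1" and u_pos: "0 < u"
    and t_small: "t < m \<Longrightarrow> 2 * m \<le> u + 1" and u_small: "u < m \<Longrightarrow> 2 * m \<le> t + 1"
  shows "min (real m ^ 2) ((1 + g) * real m) \<le> g * t + u"
proof (cases "t < m")
  case True
  then have t: "real t = real m - 1" and u: "2 * real m - 1 \<le> real u"
    using t_ge t_small by (simp_all add: of_nat_diff)
  show ?thesis
  proof (cases "real m - 1 \<le> g")
    case True
    have "0 \<le> real m - 1"
      using t by (metis of_nat_0_le_iff)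
    then have "(real m - 1) * (real m - 1) \<le> g * t"
      unfolding t by (rule mult_right_mono[OF True])
    then show ?thesis
      using u by (simp add: power2_eq_square algebra_simps min_le_iff_disj)
  next
    case False
    have "g * t = g * real m - g"
      unfolding t by (simp add: algebra_simps)
    then have "(1 + g) * real m \<le> g * t + u"
      using False u by (simp add: algebra_simps)
    then show ?thesis
      by (simp add: min_le_iff_disj)
  qed
next
  case t_large: False
  show ?thesis
  proof (cases "u < m")
    case True
    then have "2 * real m - 1 \<le> real t" and "2 \<le> real m"
      using u_small u_pos by (simp_all add: of_nat_diff)
    then have "g * (2 * real m - 1) \<le> g * t" and "1 \<le> g * (real m - 1)"
      using g by (auto intro: mult_left_mono order.trans[OF _ mult_right_mono[of 1 g]])
    then have "(1 + g) * real m \<le> g * t + u"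
      using u_ge by (simp add: algebra_simps)
    then show ?thesis
      by (simp add: min_le_iff_disj)
  next
    case False
    then have "g * real m \<le> g * t" and "real m \<le> u"
      using g t_large by (auto intro: mult_left_mono)
    then have "(1 + g) * real m \<le> g * t + u"
      by (simp add: algebra_simps)
    then show ?thesis
      by (simp add: min_le_iff_disj)
  qed
qed

context two_clusterings
begin

lemma min_square_linear_le_upairs_diff:
  assumes "R \<noteq> S" and "1 \<le> g"
  shows "min (real m ^ 2) ((1 + g) * real m)
           \<le> g * card (upairs (S - R)) + card (upairs (R - S))"
proof (cases "S - R = {}")
  case True
  then have "m * m \<le> card (upairs (R - S))"
    using assms(1) by (intro square_le_card_upairs_diff) auto
  then have "real m ^ 2 \<le> card (upairs (R - S))"
    by (simp add: power2_eq_square flip: of_nat_mult)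
  then show ?thesis
    using assms(2) by (simp add: min_le_iff_disj add_increasing)
next
  case S_R: False
  show ?thesis
  proof (cases "R - S = {}")
    case True
    then have "m * m \<le> card (upairs (S - R))"
      using assms(1) by (intro swap.square_le_card_upairs_diff) auto
    then have "real m ^ 2 \<le> card (upairs (S - R))"
      by (simp add: power2_eq_square flip: of_nat_mult)
    also have "\<dots> \<le> g * card (upairs (S - R))"
      using assms(2) by (simp add: mult_le_cancel_right1)
    finally show ?thesis
      by (simp add: min_le_iff_disj)
  next
    case False
    then show ?thesis
      using S_R assms(2) le_card_upairs_diff swap.le_card_upairs_diff
        double_le_card_upairs_diff_of_small swap.double_le_card_upairs_diff_of_small
      by (intro min_square_linear_le) (auto simp: card_gt_0_iff finite_upairs_diff)
  qed
qed

end

lemma clustering_partition_rel: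
  assumes "finite V" and P: "partition_on V P" and large: "\<And>B. B \<in> P \<Longrightarrow> m \<le> card B"
  shows "clustering V m {(u, v). \<exists>B\<in>P. u \<in> B \<and> v \<in> B}"
proof
  show "finite V"
    by fact
  show "equiv V {(u, v). \<exists>B\<in>P. u \<in> B \<and> v \<in> B}"
    using P by (rule equiv_partition_on)
  fix v assume "v \<in> V"
  then obtain B where B: "B \<in> P" "v \<in> B"
    using partition_onD1[OF P] by blast
  have "{(u, v). \<exists>B\<in>P. u \<in> B \<and> v \<in> B}``{v} = B"
    using B partition_onD2[OF P] by (auto dest: disjointD)
  then show "m \<le> card ({(u, v). \<exists>B\<in>P. u \<in> B \<and> v \<in> B}``{v})"
    using large[OF B(1)] by simp
qed

definition codeword_rel :: "nat \<Rightarrow> (nat \<times> nat \<Rightarrow> bool) \<Rightarrow> nat rel" where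
  "codeword_rel n x = {(u, v) \<in> {1..n} \<times> {1..n}. u = v \<or> x (min u v, max u v)}"

lemma codeword_rel_pairs: "(i, j) \<in> pairs n \<Longrightarrow> (i, j) \<in> codeword_rel n x \<longleftrightarrow> x (i, j)"
  by (auto simp: pairs_def codeword_rel_def)

lemma community_code_pairs: "x \<in> community_code n m \<Longrightarrow> x k \<Longrightarrow> k \<in> pairs n"
  by (auto simp: community_code_def adj_vec_def)

lemma community_code_eqI:
  assumes "x \<in> community_code n m" "y \<in> community_code n m"
    and "codeword_rel n x = codeword_rel n y"
  shows "x = y"
proof
  fix k
  show "x k = y k"
    using assms community_code_pairs[of _ n m k] codeword_rel_pairs[of "fst k" "snd k" n]
    by (metis prod.collapse)
qed

lemma clustering_codeword_rel:
  assumes "x \<in> community_code n m"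
  shows "clustering {1..n} m (codeword_rel n x)"
proof -
  obtain E P where x: "x = adj_vec n E" and P: "clique_partition {1..n} m P"
    and E: "\<forall>i\<in>{1..n}. \<forall>j\<in>{1..n}. E i j \<longleftrightarrow> i \<noteq> j \<and> (\<exists>B\<in>P. i \<in> B \<and> j \<in> B)"
    using assms by (auto simp: community_code_def cluster_graph_def)
  have part: "partition_on {1..n} P"
    using P by (auto simp: clique_partition_def partition_on_def disjoint_def)
  have "(u, v) \<in> codeword_rel n x \<longleftrightarrow> (\<exists>B\<in>P. u \<in> B \<and> v \<in> B)" for u v
  proof (cases "u \<in> {1..n} \<and> v \<in> {1..n}")
    case True
    then show ?thesis
      using E partition_onD1[OF part]
      by (cases u v rule: linorder_cases) (auto simp: codeword_rel_def x adj_vec_def pairs_def)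
  next
    case False
    then show ?thesis
      using partition_onD1[OF part] by (auto simp: codeword_rel_def)
  qed
  then have "codeword_rel n x = {(u, v). \<exists>B\<in>P. u \<in> B \<and> v \<in> B}"
    by auto
  then show ?thesis
    using clustering_partition_rel[OF _ part] P by (simp add: clique_partition_def)
qed

lemma dd_eq_card_upairs:
  "dd n True False y x = card (upairs (codeword_rel n y - codeword_rel n x))"
proof -
  have "upairs (codeword_rel n y - codeword_rel n x) = (\<lambda>(i, j). {i, j}) ` {k \<in> pairs n. y k \<and> \<not> x k}"
  proof safe
    fix e assume "e \<in> upairs (codeword_rel n y - codeword_rel n x)"
    then obtain u v where "(u, v) \<in> codeword_rel n y - codeword_rel n x" and e: "e = {u, v}"
      by (rule upairsE)
    then have "(min u v, max u v) \<in> {k \<in> pairs n. y k \<and> \<not> x k}"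
      by (auto simp: codeword_rel_def pairs_def min_def max_def)
    moreover have "e = {min u v, max u v}"
      using e by (auto simp: min_def max_def)
    ultimately show "e \<in> (\<lambda>(i, j). {i, j}) ` {k \<in> pairs n. y k \<and> \<not> x k}"
      by force
  next
    fix i j assume "(i, j) \<in> pairs n" "y (i, j)" "\<not> x (i, j)"
    then show "{i, j} \<in> upairs (codeword_rel n y - codeword_rel n x)"
      by (simp add: codeword_rel_pairs upairsI)
  qed
  moreover have "inj_on (\<lambda>(i, j). {i, j}) (pairs n)"
    by (auto intro!: inj_onI simp: pairs_def doubleton_eq_iff)
  ultimately show ?thesis
    unfolding dd_def by (simp add: card_image inj_on_subset)
qed

lemma dd_swap: "dd n False True y x = dd n True False x y"
  unfolding dd_def by (rule arg_cong[where f = card]) auto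

lemma partition_adj_vec_in_community_code:
  assumes "clique_partition {1..n} m P"
  shows "adj_vec n (\<lambda>i j. i \<noteq> j \<and> (\<exists>B\<in>P. i \<in> B \<and> j \<in> B)) \<in> community_code n m"
  using assms unfolding community_code_def cluster_graph_def by blast

lemma community_code_nontrivial:
  assumes "1 \<le> m" "2 * m \<le> n"
  obtains x y where "x \<in> community_code n m" "y \<in> community_code n m" "x \<noteq> y"
proof -
  define x where "x = adj_vec n (\<lambda>i j. i \<noteq> j \<and> (\<exists>B\<in>{{1..n}}. i \<in> B \<and> j \<in> B))"
  define y where "y = adj_vec n (\<lambda>i j. i \<noteq> j \<and> (\<exists>B\<in>{{1..m}, {m+1..n}}. i \<in> B \<and> j \<in> B))"
  have "x \<in> community_code n m"
    unfolding x_def using assms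
    by (intro partition_adj_vec_in_community_code) (auto simp: clique_partition_def)
  moreover have "y \<in> community_code n m"
    unfolding y_def using assms
    by (intro partition_adj_vec_in_community_code) (auto simp: clique_partition_def)
  moreover have "x (1, n)" "\<not> y (1, n)"
    using assms by (auto simp: x_def y_def adj_vec_def pairs_def)
  ultimately show thesis
    using that by blast
qed

lemma one_le_gamma_pq:
  assumes "0 < p" "p \<le> q" "p + q < 1"
  shows "1 \<le> gamma_pq p q"
proof -
  define a where "a = p / (1 - q)"
  define b where "b = q / (1 - p)"
  have "0 < a" "0 < b" "b < 1"
    using assms by (simp_all add: a_def b_def field_simps)
  have "0 \<le> (q - p) * (1 - p - q)"
    using assms by simp
  also have "\<dots> = q * (1 - q) - p * (1 - p)"
    by (simp add: algebra_simps)
  finally have "p * (1 - p) \<le> q * (1 - q)"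
    by simp
  then have "a \<le> b"
    using assms by (simp add: a_def b_def field_simps)
  then have "ln b < 0" "ln a \<le> ln b"
    using \<open>0 < a\<close> \<open>0 < b\<close> \<open>b < 1\<close> by simp_all
  then show ?thesis
    by (simp add: gamma_pq_def log_def a_def[symmetric] b_def[symmetric] le_divide_eq)
qed

theorem theorem2:
  fixes m n :: nat and p q :: real
  assumes "m \<ge> 1" and "n \<ge> 2 * m"
    and "0 < p" and "p \<le> q" and "0 < p + q" and "p + q < 1"
  shows "min_discrepancy n p q (community_code n m)
           \<ge> min (real (m ^ 2)) ((1 + gamma_pq p q) * real m)"
proof -
  let ?C = "community_code n m"
  have gamma: "1 \<le> gamma_pq p q"
    using assms by (intro one_le_gamma_pq) auto
  have bound: "min (real (m ^ 2)) ((1 + gamma_pq p q) * real m) \<le> discrepancy n p q y x"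
    if "x \<in> ?C" "y \<in> ?C" "x \<noteq> y" for x y
  proof -
    interpret two_clusterings "{1..n}" m "codeword_rel n x" "codeword_rel n y"
      using that(1,2) by (intro two_clusterings.intro clustering_codeword_rel)
    have "codeword_rel n x \<noteq> codeword_rel n y"
      using that community_code_eqI by blast
    from min_square_linear_le_upairs_diff[OF this gamma] show ?thesis
      by (simp add: discrepancy_def dd_eq_card_upairs dd_swap)
  qed
  obtain x y where "x \<in> ?C" "y \<in> ?C" "x \<noteq> y"
    using community_code_nontrivial assms(1,2) by blast
  then show ?thesis
    unfolding min_discrepancy_def using bound by (intro cInf_greatest) auto
qed

end
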